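(* Let $\xi>0$ be real, let $b\ge0$ and $N\ge2$ be integers, and for integers $0\le d\le N-1$ and $0\le l\le 2d$ put \begin{equation*} f_{d,l} = \exp\left(\frac{(2b+1)(d^2+d)\xi}{2N}\right) \cdot 2\sinh\left(\frac{(2d+1)\xi}{2N}\right) \cdot \prod_{k=1}^{l}4 \sinh\left(\frac{(2d+1+k)\xi}{2N}\right) \sinh\left(\frac{(2d+1-k)\xi}{2N}\right). \end{equation*} Then for all integers $l,d$ with $1\le d\le N-1$ and $0\le l\le2d-2$ we have $f_{d,l}> f_{d-1,l}$. *)

theory Defs
  imports Complex_Main
begin

definition f_dl :: "real \<Rightarrow> nat \<Rightarrow> nat \<Rightarrow> nat \<Rightarrow> nat \<Rightarrow> real" where
  "f_dl \<xi> b N d l =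
     exp ((2 * real b + 1) * (real d ^ 2 + real d) * \<xi> / (2 * real N))
     * (2 * sinh ((2 * real d + 1) * \<xi> / (2 * real N)))
     * (\<Prod>k=1..l. 4 * sinh ((2 * real d + 1 + real k) * \<xi> / (2 * real N))
                     * sinh ((2 * real d + 1 - real k) * \<xi> / (2 * real N)))"

end

theory Submission
  imports Defs
begin

text \<open>Viewed as a function of a real parameter t in place of d, f is a product of an
  exponential, a sinh factor and a product of pairs of sinh factors, each increasing in t
  as long as all sinh arguments stay positive, i.e. as long as l < 2t + 1. For the
  comparison of d - 1 with d this is exactly the hypothesis l \<le> 2d - 2.\<close>

definition f_real :: "real \<Rightarrow> real \<Rightarrow> nat \<Rightarrow> real \<Rightarrow> real" where
  "f_real \<beta> s l t =
     exp (\<beta> * (t\<^sup>2 + t) * s)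
     * (2 * sinh ((2 * t + 1) * s))
     * (\<Prod>k=1..l. 4 * sinh ((2 * t + 1 + real k) * s) * sinh ((2 * t + 1 - real k) * s))"

lemma f_dl_eq_f_real: "f_dl \<xi> b N d l = f_real (2 * real b + 1) (\<xi> / (2 * real N)) l (real d)"
  by (simp add: f_dl_def f_real_def mult.assoc)

lemma sinh_mult_right_strict_mono:
  fixes s x y :: real
  assumes "0 < s" and "x < y"
  shows "sinh (x * s) < sinh (y * s)"
  using assms by (simp add: sinh_real_less_iff)

lemma prod_sinh_pairs_pos:
  fixes s u :: real
  assumes "0 < s" and "real l < u"
  shows "0 < (\<Prod>k=1..l. 4 * sinh ((u + real k) * s) * sinh ((u - real k) * s))"
proof (rule prod_pos)
  fix k assume "k \<in> {1..l}"
  then have "0 < u - real k" and "0 < u + real k" using assms(2) by auto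
  then show "0 < 4 * sinh ((u + real k) * s) * sinh ((u - real k) * s)"
    using assms(1) by (simp add: sinh_real_pos_iff)
qed

lemma prod_sinh_pairs_mono:
  fixes s u u' :: real
  assumes "0 < s" and "real l < u" and "u \<le> u'"
  shows "(\<Prod>k=1..l. 4 * sinh ((u + real k) * s) * sinh ((u - real k) * s))
       \<le> (\<Prod>k=1..l. 4 * sinh ((u' + real k) * s) * sinh ((u' - real k) * s))"
proof (rule prod_mono)
  fix k assume "k \<in> {1..l}"
  then have pos: "0 < sinh ((u + real k) * s)" "0 < sinh ((u - real k) * s)"
    using assms(1,2) by (auto simp: sinh_real_pos_iff)
  have "sinh ((u + real k) * s) \<le> sinh ((u' + real k) * s)"
       "sinh ((u - real k) * s) \<le> sinh ((u' - real k) * s)"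
    using assms by (auto simp: sinh_real_le_iff)
  with pos show "0 \<le> 4 * sinh ((u + real k) * s) * sinh ((u - real k) * s)
    \<and> 4 * sinh ((u + real k) * s) * sinh ((u - real k) * s)
      \<le> 4 * sinh ((u' + real k) * s) * sinh ((u' - real k) * s)"
    by (simp add: mult_mono)
qed

lemma f_real_strict_mono:
  assumes "0 < s" and "0 \<le> \<beta>" and "real l < 2 * t + 1" and "t < t'"
  shows "f_real \<beta> s l t < f_real \<beta> s l t'"
proof -
  have "t\<^sup>2 + t \<le> t'\<^sup>2 + t'"
  proof -
    have "t'\<^sup>2 + t' - (t\<^sup>2 + t) = (t' - t) * (t' + t + 1)"
      by (simp add: power2_eq_square algebra_simps)
    also have "\<dots> \<ge> 0" using assms(3,4) by simp
    finally show ?thesis by simp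
  qed
  then have exp_le: "exp (\<beta> * (t\<^sup>2 + t) * s) \<le> exp (\<beta> * (t'\<^sup>2 + t') * s)"
    using assms(1,2) by (simp add: mult_left_mono mult_right_mono)
  have sinh_pos: "0 < sinh ((2 * t + 1) * s)"
    using assms(1,3) by (simp add: sinh_real_pos_iff)
  have sinh_less: "sinh ((2 * t + 1) * s) < sinh ((2 * t' + 1) * s)"
    using assms(1,4) by (intro sinh_mult_right_strict_mono) auto
  have "exp (\<beta> * (t\<^sup>2 + t) * s) * (2 * sinh ((2 * t + 1) * s))
      < exp (\<beta> * (t'\<^sup>2 + t') * s) * (2 * sinh ((2 * t' + 1) * s))"
    using exp_le sinh_pos sinh_less by (intro mult_le_less_imp_less) auto
  moreover have "0 < exp (\<beta> * (t\<^sup>2 + t) * s) * (2 * sinh ((2 * t + 1) * s))"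
    using sinh_pos by simp
  moreover note prod_sinh_pairs_mono[OF assms(1,3), of "2 * t' + 1"]
    and prod_sinh_pairs_pos[OF assms(1,3)]
  ultimately show ?thesis
    unfolding f_real_def using assms(4) by (simp add: mult_less_le_imp_less)
qed

theorem lemma3p1:
  fixes \<xi> :: real and b N d l :: nat
  assumes "\<xi> > 0" and "N \<ge> 2"
    and "1 \<le> d" and "d \<le> N - 1"
    and "l \<le> 2 * d - 2"
  shows "f_dl \<xi> b N d l > f_dl \<xi> b N (d - 1) l"
proof -
  have "0 < \<xi> / (2 * real N)" using assms(1,2) by simp
  moreover have "real l < 2 * (real d - 1) + 1"
  proof -
    have "l + 1 < 2 * d" using assms(3,5) by linarith
    then have "real l + 1 < 2 * real d" by linarith
    then show ?thesis by simp
  qed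
  ultimately have "f_real (2 * real b + 1) (\<xi> / (2 * real N)) l (real d - 1)
      < f_real (2 * real b + 1) (\<xi> / (2 * real N)) l (real d)"
    by (intro f_real_strict_mono) auto
  then show ?thesis using assms(3) by (simp add: f_dl_eq_f_real of_nat_diff)
qed

end
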